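(* Let $T$ be an $\mathcal O$-operator on a Lie algebra $\mathfrak g$ with respect to a representation $(V;\rho)$ and let $T_t=\sum_{i=0}^n\tau_it^i$ be an order $n$ deformation of $T$. Then $T_t$ is extendable if and only if the obstruction class $[\mathrm{Ob}]\in\mathcal H^2(V,\mathfrak g)$ is trivial, where $\mathrm{Ob}(u,v)=\sum_{i+j=n+1,\ i,j\ge1}\big([\tau_i(u),\tau_j(v)]-\tau_i(\rho(\tau_j(u))(v)-\rho(\tau_j(v))(u))\big)$.
   Context: An $\mathcal O$-operator: linear $T:V\to\mathfrak g$ with $[Tu,Tv]=T(\rho(Tu)(v)-\rho(Tv)(u))$. An order $n$ deformation of $T$ is $T_t=\sum_{i=0}^n\tau_it^i$ with $\tau_0=T$, $\tau_i\in\mathrm{Hom}(V,\mathfrak g)$, such that $\sum_{k+l=i,\,k,l\ge0}([\tau_ku,\tau_lv]-\tau_k(\rho(\tau_lu)(v)-\rho(\tau_lv)(u)))=0$ for all $u,v\in V$ and $0\le i\le n$ (i.e. the $\mathcal O$-operator identity holds modulo $t^{n+1}$). It is extendable if there is $\tau_{n+1}\in\mathrm{Hom}(V,\mathfrak g)$ such that $T_t+\tau_{n+1}t^{n+1}$ is an order $n+1$ deformation. $\mathrm{Ob}$ is a $2$-cocycle. $\mathcal H^k(V,\mathfrak g)$ is the Chevalley–Eilenberg cohomology of the Lie algebra $(V,[\cdot,\cdot]_T)$, $[u,v]_T=\rho(Tu)(v)-\rho(Tv)(u)$, with coefficients in the representation $\bar\rho(u)(x)=[Tu,x]+T\rho(x)(u)$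 on $\mathfrak g$; its coboundary is $d_{\bar\rho}f(u_1,\dots,u_{k+1})=\sum_{i}(-1)^{i+1}[Tu_i,f(\dots,\hat u_i,\dots)]+\sum_i(-1)^{i+1}T\rho(f(\dots,\hat u_i,\dots))(u_i)+\sum_{i<j}(-1)^{i+j}f([u_i,u_j]_T,u_1,\dots,\hat u_i,\dots,\hat u_j,\dots,u_{k+1})$. *)

theory Defs
  imports Complex_Main
begin

definition lie_algebra :: "('k::field \<Rightarrow> 'g::ab_group_add \<Rightarrow> 'g) \<Rightarrow> ('g \<Rightarrow> 'g \<Rightarrow> 'g) \<Rightarrow> bool" where
  "lie_algebra sG br \<longleftrightarrow>
     vector_space sG \<and>
     (\<forall>x. Vector_Spaces.linear sG sG (br x)) \<and>
     (\<forall>y. Vector_Spaces.linear sG sG (\<lambda>x. br x y)) \<and>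
     (\<forall>x. br x x = 0) \<and>
     (\<forall>x y z. br x (br y z) + br y (br z x) + br z (br x y) = 0)"

definition lie_rep ::
  "('k::field \<Rightarrow> 'g::ab_group_add \<Rightarrow> 'g) \<Rightarrow> ('g \<Rightarrow> 'g \<Rightarrow> 'g) \<Rightarrow>
   ('k \<Rightarrow> 'v::ab_group_add \<Rightarrow> 'v) \<Rightarrow> ('g \<Rightarrow> 'v \<Rightarrow> 'v) \<Rightarrow> bool" where
  "lie_rep sG br sV rho \<longleftrightarrow>
     vector_space sV \<and>
     (\<forall>x. Vector_Spaces.linear sV sV (rho x)) \<and>
     (\<forall>v. Vector_Spaces.linear sG sV (\<lambda>x. rho x v)) \<and>
     (\<forall>x y v. rho (br x y) v = rho x (rho y v) - rho y (rho x v))"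

definition O_operator ::
  "('k::field \<Rightarrow> 'g::ab_group_add \<Rightarrow> 'g) \<Rightarrow> ('g \<Rightarrow> 'g \<Rightarrow> 'g) \<Rightarrow>
   ('k \<Rightarrow> 'v::ab_group_add \<Rightarrow> 'v) \<Rightarrow> ('g \<Rightarrow> 'v \<Rightarrow> 'v) \<Rightarrow> ('v \<Rightarrow> 'g) \<Rightarrow> bool" where
  "O_operator sG br sV rho T \<longleftrightarrow>
     Vector_Spaces.linear sV sG T \<and>
     (\<forall>u v. br (T u) (T v) = T (rho (T u) v - rho (T v) u))"

text \<open>The coefficient of t^i in the O-operator identity for T_t = sum tau_i t^i.\<close>
definition def_coeff ::
  "('g::ab_group_add \<Rightarrow> 'g \<Rightarrow> 'g) \<Rightarrow> ('g \<Rightarrow> 'v::ab_group_add \<Rightarrow> 'v) \<Rightarrow> (nat \<Rightarrow> 'v \<Rightarrow> 'g)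
   \<Rightarrow> nat \<Rightarrow> 'v \<Rightarrow> 'v \<Rightarrow> 'g" where
  "def_coeff br rho tau i u v =
     (\<Sum>k\<le>i. br (tau k u) (tau (i - k) v) - tau k (rho (tau (i - k) u) v - rho (tau (i - k) v) u))"

text \<open>Order n deformation T_t = sum_{i=0}^n tau_i t^i of T (only tau 0, ..., tau n matter).\<close>
definition order_deformation ::
  "('k::field \<Rightarrow> 'g::ab_group_add \<Rightarrow> 'g) \<Rightarrow> ('g \<Rightarrow> 'g \<Rightarrow> 'g) \<Rightarrow>
   ('k \<Rightarrow> 'v::ab_group_add \<Rightarrow> 'v) \<Rightarrow> ('g \<Rightarrow> 'v \<Rightarrow> 'v) \<Rightarrow> ('v \<Rightarrow> 'g) \<Rightarrow> nat \<Rightarrow>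
   (nat \<Rightarrow> 'v \<Rightarrow> 'g) \<Rightarrow> bool" where
  "order_deformation sG br sV rho T n tau \<longleftrightarrow>
     tau 0 = T \<and>
     (\<forall>i\<le>n. Vector_Spaces.linear sV sG (tau i)) \<and>
     (\<forall>i\<le>n. \<forall>u v. def_coeff br rho tau i u v = 0)"

definition extendable ::
  "('k::field \<Rightarrow> 'g::ab_group_add \<Rightarrow> 'g) \<Rightarrow> ('g \<Rightarrow> 'g \<Rightarrow> 'g) \<Rightarrow>
   ('k \<Rightarrow> 'v::ab_group_add \<Rightarrow> 'v) \<Rightarrow> ('g \<Rightarrow> 'v \<Rightarrow> 'v) \<Rightarrow> ('v \<Rightarrow> 'g) \<Rightarrow> nat \<Rightarrow>
   (nat \<Rightarrow> 'v \<Rightarrow> 'g) \<Rightarrow> bool" where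
  "extendable sG br sV rho T n tau \<longleftrightarrow>
     (\<exists>t. Vector_Spaces.linear sV sG t \<and>
          order_deformation sG br sV rho T (Suc n) (tau(Suc n := t)))"

definition Ob ::
  "('g::ab_group_add \<Rightarrow> 'g \<Rightarrow> 'g) \<Rightarrow> ('g \<Rightarrow> 'v::ab_group_add \<Rightarrow> 'v) \<Rightarrow> (nat \<Rightarrow> 'v \<Rightarrow> 'g)
   \<Rightarrow> nat \<Rightarrow> 'v \<Rightarrow> 'v \<Rightarrow> 'g" where
  "Ob br rho tau n u v =
     (\<Sum>i\<in>{1..n}. br (tau i u) (tau (Suc n - i) v)
                   - tau i (rho (tau (Suc n - i) u) v - rho (tau (Suc n - i) v) u))"

definition bracketT :: "('g \<Rightarrow> 'v::ab_group_add \<Rightarrow> 'v) \<Rightarrow> ('v \<Rightarrow> 'g) \<Rightarrow> 'v \<Rightarrow> 'v \<Rightarrow> 'v" where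
  "bracketT rho T u v = rho (T u) v - rho (T v) u"

definition del_nth :: "nat \<Rightarrow> 'a list \<Rightarrow> 'a list" where
  "del_nth i xs = take i xs @ drop (Suc i) xs"

text \<open>Chevalley-Eilenberg coboundary d_{rho-bar} of (V,[.,.]_T) with coefficients in g
(representation rho-bar(u)x = [Tu,x] + T(rho(x)u)). A k-cochain is a function on lists of
k vectors; d f is evaluated on a list of k+1 vectors u_1..u_{k+1} (indices 0-based here).\<close>
definition cobound ::
  "('k::field \<Rightarrow> 'g::ab_group_add \<Rightarrow> 'g) \<Rightarrow> ('g \<Rightarrow> 'g \<Rightarrow> 'g) \<Rightarrow>
   ('g \<Rightarrow> 'v::ab_group_add \<Rightarrow> 'v) \<Rightarrow> ('v \<Rightarrow> 'g) \<Rightarrow> ('v list \<Rightarrow> 'g) \<Rightarrow> nat \<Rightarrow> 'v list \<Rightarrow> 'g" where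
  "cobound sG br rho T f k us =
     (\<Sum>i<Suc k. sG ((-1) ^ i) (br (T (us ! i)) (f (del_nth i us))))
   + (\<Sum>i<Suc k. sG ((-1) ^ i) (T (rho (f (del_nth i us)) (us ! i))))
   + (\<Sum>i<Suc k. \<Sum>j<Suc k. if i < j then
        sG ((-1) ^ (i + j)) (f (bracketT rho T (us ! i) (us ! j) # del_nth i (del_nth j us)))
      else 0)"

text \<open>The class of a 2-cochain c is trivial in H^2(V,g): c = d f for a 1-cochain f
(a linear map V \<rightarrow> g, viewed as a function on one-element lists).\<close>
definition trivial_class2 ::
  "('k::field \<Rightarrow> 'g::ab_group_add \<Rightarrow> 'g) \<Rightarrow> ('g \<Rightarrow> 'g \<Rightarrow> 'g) \<Rightarrow>
   ('k \<Rightarrow> 'v::ab_group_add \<Rightarrow> 'v) \<Rightarrow> ('g \<Rightarrow> 'v \<Rightarrow> 'v) \<Rightarrow> ('v \<Rightarrow> 'g) \<Rightarrow> ('v \<Rightarrow> 'v \<Rightarrow> 'g) \<Rightarrow> bool" where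
  "trivial_class2 sG br sV rho T c \<longleftrightarrow>
     (\<exists>f. Vector_Spaces.linear sV sG (\<lambda>u. f [u]) \<and>
          (\<forall>u v. c u v = cobound sG br rho T f 1 [u, v]))"

end

theory Submission
  imports Defs
begin

text \<open>Only the top coefficient of the O-operator identity for T_t + tau_{n+1} t^{n+1} involves
  tau_{n+1}, and it is Ob + d tau_{n+1}, where d is the coboundary on 1-cochains. So the
  deformation extends iff Ob = d(-tau_{n+1}) for some linear tau_{n+1}, i.e. iff [Ob] = 0.\<close>

lemma linear_diff_apply: "Vector_Spaces.linear s1 s2 f \<Longrightarrow> f (x - y) = f x - f y"
  by (simp add: linear_iff_module_hom module_hom.diff)

lemma linear_add_apply: "Vector_Spaces.linear s1 s2 f \<Longrightarrow> f (x + y) = f x + f y"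
  by (simp add: linear_iff_module_hom module_hom.add)

lemma linear_neg_apply: "Vector_Spaces.linear s1 s2 f \<Longrightarrow> f (- x) = - f x"
  by (simp add: linear_iff_module_hom module_hom.neg)

lemma linear_compose_uminus:
  "Vector_Spaces.linear s1 s2 f \<Longrightarrow> Vector_Spaces.linear s1 s2 (\<lambda>x. - f x)"
  unfolding linear_iff_module_hom by (simp add: module_hom_iff module.scale_minus_right)

lemma vector_space_scale_one: "vector_space s \<Longrightarrow> s 1 x = x"
  by (simp add: module_iff_vector_space[symmetric] module.scale_one)

lemma vector_space_scale_minus_one: "vector_space s \<Longrightarrow> s (-1) x = - x"
  using module.scale_minus_left[of s 1 x] module.scale_one[of s x]
  by (simp add: module_iff_vector_space)

lemma lie_algebra_bracket_antisym:
  assumes "lie_algebra sG br"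
  shows "br y x = - br x y"
proof -
  have left: "\<And>a. Vector_Spaces.linear sG sG (br a)"
    and right: "\<And>b. Vector_Spaces.linear sG sG (\<lambda>a. br a b)"
    and alt: "\<And>a. br a a = 0"
    using assms unfolding lie_algebra_def by auto
  have "0 = br (x + y) (x + y)" using alt by simp
  also have "\<dots> = br x (x + y) + br y (x + y)" using linear_add_apply[OF right] by simp
  also have "\<dots> = br x y + br y x" using linear_add_apply[OF left] alt by simp
  finally show ?thesis by (simp add: eq_neg_iff_add_eq_0 add.commute)
qed

lemma lie_algebra_bracket_uminus_right:
  "lie_algebra sG br \<Longrightarrow> br a (- x) = - br a x"
  unfolding lie_algebra_def by (blast intro: linear_neg_apply)

lemma lie_rep_uminus_left:
  "lie_rep sG br sV rho \<Longrightarrow> rho (- x) w = - rho x w"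
  unfolding lie_rep_def using linear_neg_apply[of sG sV "\<lambda>x. rho x w"] by blast

lemma cobound_1:
  assumes "vector_space sG"
  shows "cobound sG br rho T f 1 [u, v] =
    br (T u) (f [v]) - br (T v) (f [u]) + T (rho (f [v]) u) - T (rho (f [u]) v)
    - f [bracketT rho T u v]"
  unfolding cobound_def using assms
  by (simp add: vector_space_scale_one vector_space_scale_minus_one del_nth_def
      lessThan_Suc numeral_2_eq_2)

lemma cobound_1_uminus:
  assumes "lie_algebra sG br" and "lie_rep sG br sV rho" and "Vector_Spaces.linear sV sG T"
  shows "cobound sG br rho T (\<lambda>l. - f l) 1 [u, v] = - cobound sG br rho T f 1 [u, v]"
proof -
  have vs: "vector_space sG" using assms(1) unfolding lie_algebra_def by blast
  show ?thesis
    unfolding cobound_1[OF vs]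
    by (simp add: lie_algebra_bracket_uminus_right[OF assms(1)]
        lie_rep_uminus_left[OF assms(2)] linear_neg_apply[OF assms(3)])
qed

lemma trivial_class2_iff_cobound_of_linear:
  assumes "vector_space sG"
  shows "trivial_class2 sG br sV rho T c \<longleftrightarrow>
    (\<exists>t. Vector_Spaces.linear sV sG t \<and> (\<forall>u v. c u v = cobound sG br rho T (\<lambda>l. t (hd l)) 1 [u, v]))"
proof
  assume "trivial_class2 sG br sV rho T c"
  then obtain f where "Vector_Spaces.linear sV sG (\<lambda>u. f [u])"
    and "\<forall>u v. c u v = cobound sG br rho T f 1 [u, v]"
    unfolding trivial_class2_def by blast
  then show "\<exists>t. Vector_Spaces.linear sV sG t \<and>
      (\<forall>u v. c u v = cobound sG br rho T (\<lambda>l. t (hd l)) 1 [u, v])"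
    unfolding cobound_1[OF assms] by (intro exI[of _ "\<lambda>u. f [u]"]) simp
next
  assume "\<exists>t. Vector_Spaces.linear sV sG t \<and>
      (\<forall>u v. c u v = cobound sG br rho T (\<lambda>l. t (hd l)) 1 [u, v])"
  then show "trivial_class2 sG br sV rho T c"
    unfolding trivial_class2_def by force
qed

lemma trivial_class2_iff_add_cobound_of_linear:
  assumes "lie_algebra sG br" and "lie_rep sG br sV rho" and "Vector_Spaces.linear sV sG T"
  shows "trivial_class2 sG br sV rho T c \<longleftrightarrow>
    (\<exists>t. Vector_Spaces.linear sV sG t \<and>
      (\<forall>u v. c u v + cobound sG br rho T (\<lambda>l. t (hd l)) 1 [u, v] = 0))"
    (is "_ \<longleftrightarrow> (\<exists>t. ?L t \<and> ?Sum t)")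
proof -
  let ?Eq = "\<lambda>t. \<forall>u v. c u v = cobound sG br rho T (\<lambda>l. t (hd l)) 1 [u, v]"
  have d_uminus: "cobound sG br rho T (\<lambda>l. - t (hd l)) 1 [u, v]
      = - cobound sG br rho T (\<lambda>l. t (hd l)) 1 [u, v]" for t u v
    using cobound_1_uminus[OF assms] by simp
  have "(\<exists>t. ?L t \<and> ?Eq t) \<longleftrightarrow> (\<exists>t. ?L t \<and> ?Sum t)"
  proof
    assume "\<exists>t. ?L t \<and> ?Eq t"
    then obtain t where "?L t" "?Eq t" by blast
    then have "?L (\<lambda>x. - t x)" "?Sum (\<lambda>x. - t x)"
      unfolding d_uminus by (simp_all add: linear_compose_uminus)
    then show "\<exists>t. ?L t \<and> ?Sum t" by blast
  next
    assume "\<exists>t. ?L t \<and> ?Sum t"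
    then obtain t where "?L t" "?Sum t" by blast
    then have "?L (\<lambda>x. - t x)" "?Eq (\<lambda>x. - t x)"
      unfolding d_uminus by (simp_all add: linear_compose_uminus eq_neg_iff_add_eq_0)
    then show "\<exists>t. ?L t \<and> ?Eq t" by blast
  qed
  moreover have "vector_space sG" using assms(1) unfolding lie_algebra_def by blast
  ultimately show ?thesis by (simp add: trivial_class2_iff_cobound_of_linear)
qed

lemma def_coeff_fun_upd_le:
  "i \<le> n \<Longrightarrow> def_coeff br rho (tau(Suc n := t)) i = def_coeff br rho tau i"
  unfolding def_coeff_def by (intro ext sum.cong) auto

lemma def_coeff_fun_upd_Suc:
  assumes "tau 0 = T"
  shows "def_coeff br rho (tau(Suc n := t)) (Suc n) u v =
     (br (T u) (t v) - T (rho (t u) v - rho (t v) u)) + Ob br rho tau n u v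
     + (br (t u) (T v) - t (rho (T u) v - rho (T v) u))"
proof -
  let ?g = "\<lambda>k. br ((tau(Suc n := t)) k u) ((tau(Suc n := t)) (Suc n - k) v) -
      (tau(Suc n := t)) k (rho ((tau(Suc n := t)) (Suc n - k) u) v
                           - rho ((tau(Suc n := t)) (Suc n - k) v) u)"
  have "def_coeff br rho (tau(Suc n := t)) (Suc n) u v = sum ?g {..n} + ?g (Suc n)"
    unfolding def_coeff_def by simp
  also have "{..n} = insert 0 {1..n}" by auto
  also have "sum ?g (insert 0 {1..n}) = ?g 0 + sum ?g {1..n}" by simp
  also have "sum ?g {1..n} = Ob br rho tau n u v"
    unfolding Ob_def by (rule sum.cong) auto
  finally show ?thesis using assms by (simp add: fun_upd_def)
qed

lemma def_coeff_fun_upd_Suc_eq_Ob_plus_cobound: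
  assumes "lie_algebra sG br" and "lie_rep sG br sV rho"
    and "Vector_Spaces.linear sV sG T" and "tau 0 = T"
    and "Vector_Spaces.linear sV sG t"
  shows "def_coeff br rho (tau(Suc n := t)) (Suc n) u v =
    Ob br rho tau n u v + cobound sG br rho T (\<lambda>l. t (hd l)) 1 [u, v]"
proof -
  have vs: "vector_space sG" using assms(1) unfolding lie_algebra_def by blast
  show ?thesis
    unfolding def_coeff_fun_upd_Suc[where tau = tau, OF assms(4)] cobound_1[OF vs] bracketT_def
    using lie_algebra_bracket_antisym[OF assms(1), of "t u" "T v"]
    by (simp add: linear_diff_apply[OF assms(3)] linear_diff_apply[OF assms(5)] algebra_simps)
qed

lemma order_deformation_fun_upd_Suc_iff:
  assumes "order_deformation sG br sV rho T n tau" and "Vector_Spaces.linear sV sG t"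
  shows "order_deformation sG br sV rho T (Suc n) (tau(Suc n := t)) \<longleftrightarrow>
    (\<forall>u v. def_coeff br rho (tau(Suc n := t)) (Suc n) u v = 0)"
  using assms def_coeff_fun_upd_le[of _ n br rho tau t]
  unfolding order_deformation_def by (auto simp: le_Suc_eq)

theorem theorem5p15:
  fixes sG :: "'k::field \<Rightarrow> 'g::ab_group_add \<Rightarrow> 'g"
    and br :: "'g \<Rightarrow> 'g \<Rightarrow> 'g"
    and sV :: "'k \<Rightarrow> 'v::ab_group_add \<Rightarrow> 'v"
    and rho :: "'g \<Rightarrow> 'v \<Rightarrow> 'v"
    and T :: "'v \<Rightarrow> 'g"
    and tau :: "nat \<Rightarrow> 'v \<Rightarrow> 'g"
    and n :: nat
  assumes "lie_algebra sG br"
    and "lie_rep sG br sV rho"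
    and "O_operator sG br sV rho T"
    and "order_deformation sG br sV rho T n tau"
  shows "extendable sG br sV rho T n tau \<longleftrightarrow>
         trivial_class2 sG br sV rho T (Ob br rho tau n)"
proof -
  have lin_T: "Vector_Spaces.linear sV sG T" and tau0: "tau 0 = T"
    using assms(3,4) unfolding O_operator_def order_deformation_def by auto
  have "extendable sG br sV rho T n tau \<longleftrightarrow>
      (\<exists>t. Vector_Spaces.linear sV sG t \<and>
        (\<forall>u v. Ob br rho tau n u v + cobound sG br rho T (\<lambda>l. t (hd l)) 1 [u, v] = 0))"
    unfolding extendable_def
    by (auto simp: order_deformation_fun_upd_Suc_iff[OF assms(4)]
        def_coeff_fun_upd_Suc_eq_Ob_plus_cobound[where tau = tau, OF assms(1,2) lin_T tau0])
  also have "\<dots> \<longleftrightarrow> trivial_class2 sG br sV rho T (Ob br rho tau n)"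
    by (rule trivial_class2_iff_add_cobound_of_linear[OF assms(1,2) lin_T, symmetric])
  finally show ?thesis .
qed

end
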